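(* Let $v\equiv 1$ or $7\pmod{24}$ with $v\ge 7$, and let $n=\frac{v-1}{6}$. For all integers $i,j$ with $0\le j\le n$ and $j\le i\le n$, there exists a cyclic four-fold triple system CTS$(v,4)$ whose fine structure $(c_1,c_2,c_3,c_4)$ satisfies $(c_2,c_3,c_4)=(2n-2i,\,i-j,\,j)$.
   Context: A cyclic $\lambda$-fold triple system CTS$(v,\lambda)$ is a multiset $\mathcal B$ of 3-element subsets (blocks) of $\mathbb Z_v$ such that every 2-element subset of $\mathbb Z_v$ is contained in exactly $\lambda$ blocks (counted with multiplicity), and $\mathcal B$ is invariant under the translation $x\mapsto x+1$. Thus $\mathcal B$ is a union of translation orbits of 3-subsets with multiplicities; a base block is an orbit representative. The fine structure is $(c_1,\ldots,c_\lambda)$, where $c_i$ is the number of distinct base blocks (orbits) occurring with multiplicity exactly $i$; for $\lambda=4$, $c_1=4n-4c_4-3c_3-2c_2$. *)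

theory Defs
  imports Main "HOL-Library.Multiset"
begin

text \<open>Elements of Z_v are represented by the naturals 0..v-1; translation by k is
  x \<mapsto> (x + k) mod v.  Blocks are 3-element subsets of {0..<v}.\<close>

definition shift_block :: "nat \<Rightarrow> nat \<Rightarrow> nat set \<Rightarrow> nat set" where
  "shift_block v k b = (\<lambda>x. (x + k) mod v) ` b"

definition block_orbit :: "nat \<Rightarrow> nat set \<Rightarrow> nat set set" where
  "block_orbit v b = {shift_block v k b | k. k < v}"

definition is_CTS :: "nat \<Rightarrow> nat \<Rightarrow> nat set multiset \<Rightarrow> bool" where
  "is_CTS v lam B \<longleftrightarrow>
     (\<forall>b \<in># B. b \<subseteq> {0..<v} \<and> card b = 3) \<and>
     image_mset (shift_block v 1) B = B \<and>
     (\<forall>x \<in> {0..<v}. \<forall>y \<in> {0..<v}. x \<noteq> y \<longrightarrow>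
        size (filter_mset (\<lambda>b. {x, y} \<subseteq> b) B) = lam)"

definition fine_c :: "nat \<Rightarrow> nat set multiset \<Rightarrow> nat \<Rightarrow> nat" where
  "fine_c v B i = card {block_orbit v b | b. b \<in># B \<and> count B b = i}"

end

theory Submission
  imports Defs
begin

text \<open>By Skolem's theorem, for \<open>n \<equiv> 0, 1 (mod 4)\<close> the set \<open>{1..3n}\<close> splits into \<open>n\<close> triples
  \<open>{a\<^sub>k, b\<^sub>k, a\<^sub>k + b\<^sub>k}\<close>. Modulo \<open>v = 6n + 1\<close> the differences \<open>\<plusminus>a\<^sub>k, \<plusminus>b\<^sub>k, \<plusminus>(a\<^sub>k + b\<^sub>k)\<close>
  then run through every nonzero residue exactly once, and both \<open>{0, a\<^sub>k, a\<^sub>k + b\<^sub>k}\<close> and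
  \<open>{0, b\<^sub>k, a\<^sub>k + b\<^sub>k}\<close> have exactly these differences. So taking the orbits of these two base
  blocks with multiplicities \<open>m\<^sub>k\<close> and \<open>4 - m\<^sub>k\<close> covers every pair of \<open>\<int>\<^sub>v\<close> exactly four
  times, whatever the \<open>m\<^sub>k\<close>. All \<open>2n\<close> orbits are full and pairwise distinct, so the fine structure
  is read off from the \<open>m\<^sub>k\<close>: \<open>m\<^sub>k = 4\<close> for \<open>k < j\<close>, \<open>3\<close> for \<open>j \<le> k < i\<close> and \<open>2\<close> for
  \<open>i \<le> k\<close> gives \<open>(c\<^sub>2, c\<^sub>3, c\<^sub>4) = (2n - 2i, i - j, j)\<close>.\<close>

section \<open>Cyclic shifts and orbits\<close>

lemma mod_eq_iff_less_double:
  fixes a b v :: nat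
  assumes "a < 2 * v" "b < 2 * v"
  shows "a mod v = b mod v \<longleftrightarrow> a = b \<or> a = b + v \<or> a + v = b"
proof -
  have "a mod v = (if a < v then a else a - v)" "b mod v = (if b < v then b else b - v)"
    using assms by (simp_all add: mod_if le_mod_geq)
  then show ?thesis using assms by auto
qed

lemma mem_shift_block: "z \<in> shift_block v k b \<longleftrightarrow> (\<exists>s\<in>b. z = (s + k) mod v)"
  by (auto simp: shift_block_def)

lemma shift_block_subset: "0 < v \<Longrightarrow> shift_block v k b \<subseteq> {0..<v}"
  by (auto simp: shift_block_def)

lemma shift_block_shift_block: "shift_block v j (shift_block v k b) = shift_block v (j + k) b"
  unfolding shift_block_def image_image
  by (rule image_cong) (auto simp: mod_add_left_eq add.assoc add.commute[of j k])

lemma shift_block_mod: "shift_block v (k mod v) b = shift_block v k b"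
  unfolding shift_block_def by (simp add: mod_add_right_eq)

lemma shift_block_0: "b \<subseteq> {0..<v} \<Longrightarrow> shift_block v 0 b = b"
  unfolding shift_block_def by (auto simp: subset_iff image_iff)

lemma shift_block_self: "b \<subseteq> {0..<v} \<Longrightarrow> shift_block v v b = b"
  using shift_block_mod[of v v b] shift_block_0[of b v] by simp

lemma card_shift_block:
  assumes "b \<subseteq> {0..<v}"
  shows "card (shift_block v k b) = card b"
proof -
  have "inj_on (\<lambda>x. (x + k) mod v) {0..<v}"
  proof (rule inj_onI)
    fix x y assume x: "x \<in> {0..<v}" and y: "y \<in> {0..<v}" and "(x + k) mod v = (y + k) mod v"
    then have "(x + k mod v) mod v = (y + k mod v) mod v"
      by (simp add: mod_add_right_eq)
    moreover have "k mod v < v" using x by simp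
    ultimately show "x = y"
      using x y mod_eq_iff_less_double[of "x + k mod v" v "y + k mod v"] by auto
  qed
  then show ?thesis
    unfolding shift_block_def using assms by (intro card_image) (rule inj_on_subset)
qed

text \<open>For residues below \<open>v\<close>, reduction modulo \<open>v\<close> amounts to subtracting \<open>v\<close> at most once.\<close>
lemma mem_shift_block_iff:
  assumes "b \<subseteq> {0..<v}" "k < v" "x < v"
  shows "x \<in> shift_block v k b \<longleftrightarrow> (\<exists>s\<in>b. s + k = x \<or> s + k = x + v)"
proof -
  have "x = (s + k) mod v \<longleftrightarrow> s + k = x \<or> s + k = x + v" if "s \<in> b" for s
    using that assms mod_eq_iff_less_double[of "s + k" v x] by auto
  then show ?thesis by (auto simp: mem_shift_block)
qed

lemma mem_shift_block_translate:
  assumes "s \<in> b" "(s + d) mod v \<in> b"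
  shows "((s + k) mod v + d) mod v \<in> shift_block v k b"
proof -
  have "((s + k) mod v + d) mod v = ((s + d) mod v + k) mod v"
    by (simp add: mod_add_left_eq mod_add_right_eq add.commute add.left_commute)
  then show ?thesis using assms(2) by (auto simp: mem_shift_block)
qed

lemma mem_block_orbit_self: "b \<subseteq> {0..<v} \<Longrightarrow> 0 < v \<Longrightarrow> b \<in> block_orbit v b"
  using shift_block_0[of b v] by (force simp: block_orbit_def)

lemma block_orbit_shift_block:
  assumes "k < v"
  shows "block_orbit v (shift_block v k b) = block_orbit v b"
proof
  show "block_orbit v (shift_block v k b) \<subseteq> block_orbit v b"
  proof
    fix z assume "z \<in> block_orbit v (shift_block v k b)"
    then obtain j where "j < v" "z = shift_block v j (shift_block v k b)"
      by (auto simp: block_orbit_def)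
    then have "z = shift_block v ((j + k) mod v) b"
      by (simp add: shift_block_shift_block shift_block_mod)
    then show "z \<in> block_orbit v b" using assms by (auto simp: block_orbit_def)
  qed
  show "block_orbit v b \<subseteq> block_orbit v (shift_block v k b)"
  proof
    fix z assume "z \<in> block_orbit v b"
    then obtain m where m: "m < v" "z = shift_block v m b" by (auto simp: block_orbit_def)
    have "((m + v - k) mod v + k) mod v = m"
      using m assms by (simp add: mod_add_left_eq)
    then have "z = shift_block v ((m + v - k) mod v) (shift_block v k b)"
      using m by (metis shift_block_mod shift_block_shift_block)
    then show "z \<in> block_orbit v (shift_block v k b)"
      using assms by (auto simp: block_orbit_def)
  qed
qed

lemma block_orbit_eq_if_mem:
  assumes "z \<in> block_orbit v b"
  shows "block_orbit v z = block_orbit v b"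
proof -
  obtain k where "k < v" "z = shift_block v k b" using assms by (auto simp: block_orbit_def)
  then show ?thesis by (simp add: block_orbit_shift_block)
qed

lemma shift_block_preserves_diffs:
  assumes b: "b \<subseteq> {0..M}" and b': "b' \<subseteq> {0..M}" "b' = shift_block v d b" and M: "2 * M < v"
    and s: "s \<in> b" "\<forall>c\<in>C. s + c \<in> b" and C: "C \<subseteq> {0..M}"
  shows "\<exists>y\<in>b'. \<forall>c\<in>C. y + c \<in> b'"
proof (intro bexI ballI)
  show y: "(s + d) mod v \<in> b'" using s b' by (auto simp: mem_shift_block)
  fix c assume c: "c \<in> C"
  have "(s + c) mod v \<in> b" using s c b M by auto
  then have "((s + d) mod v + c) mod v \<in> b'"
    using mem_shift_block_translate[OF s(1)] b' by (metis add.commute)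
  moreover have "(s + d) mod v + c < v" using y c b' C M by fastforce
  ultimately show "(s + d) mod v + c \<in> b'" by simp
qed

definition orbit_mset :: "nat \<Rightarrow> nat set \<Rightarrow> nat set multiset" where
  "orbit_mset v b = mset (map (\<lambda>k. shift_block v k b) [0..<v])"

lemma size_filter_orbit_mset:
  "size (filter_mset P (orbit_mset v b)) = card {k\<in>{0..<v}. P (shift_block v k b)}"
proof -
  have "size (filter_mset P (orbit_mset v b)) = length (filter (\<lambda>k. P (shift_block v k b)) [0..<v])"
    unfolding orbit_mset_def by (simp only: mset_filter[symmetric] size_mset filter_map length_map o_def)
  also have "\<dots> = card {k\<in>{0..<v}. P (shift_block v k b)}"
    by (subst distinct_card[symmetric]) (auto intro: arg_cong[where f = card])
  finally show ?thesis .
qed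

lemma count_orbit_mset: "count (orbit_mset v b) z = card {k\<in>{0..<v}. shift_block v k b = z}"
  using size_filter_orbit_mset[of "\<lambda>y. y = z" v b] by (simp add: filter_eq_replicate_mset)

lemma image_mset_shift_orbit_mset:
  assumes "b \<subseteq> {0..<v}" "0 < v"
  shows "image_mset (shift_block v 1) (orbit_mset v b) = orbit_mset v b"
proof -
  define F where "F k = shift_block v k b" for k
  have "shift_block v 1 \<circ> F = F \<circ> Suc"
    by (rule ext) (simp add: F_def shift_block_shift_block)
  then have "image_mset (shift_block v 1) (orbit_mset v b) = mset (map F (map Suc [0..<v]))"
    unfolding orbit_mset_def F_def by (simp only: mset_map[symmetric] map_map)
  also have "map Suc [0..<v] = [1..<v] @ [v]"
    using assms(2) by (simp add: map_Suc_upt upt_Suc_append Suc_leI)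
  also have "mset (map F ([1..<v] @ [v])) = mset (F 0 # map F [1..<v])"
    using shift_block_0[OF assms(1)] shift_block_self[OF assms(1)]
    by (simp add: F_def del: mset_map mset_upt)
  also have "F 0 # map F [1..<v] = map F [0..<v]"
    using assms(2) by (simp add: upt_rec)
  finally show ?thesis unfolding orbit_mset_def F_def .
qed

text \<open>For \<open>x \<noteq> y\<close> below \<open>v\<close>, \<open>cyclic_diff v x y\<close> is the representative of \<open>y - x\<close> in \<open>{1..<v}\<close>.\<close>
definition cyclic_diff :: "nat \<Rightarrow> nat \<Rightarrow> nat \<Rightarrow> nat" where
  "cyclic_diff v x y = (if x < y then y - x else y + v - x)"

lemma cyclic_diff_bounds: "x < v \<Longrightarrow> y < v \<Longrightarrow> x \<noteq> y \<Longrightarrow> 0 < cyclic_diff v x y \<and> cyclic_diff v x y < v"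
  by (auto simp: cyclic_diff_def)

lemma card_shifts_containing_pair:
  assumes b: "b \<subseteq> {0..<v}" and x: "x < v" and y: "y < v"
  shows "card {k\<in>{0..<v}. {x, y} \<subseteq> shift_block v k b}
    = card {(s,u)\<in>b \<times> b. cyclic_diff v x y + s = u \<or> cyclic_diff v x y + s = u + v}"
    (is "card ?K = card ?P")
proof -
  \<comment> \<open>the shift carrying \<open>s\<close> to \<open>x\<close>\<close>
  define f where "f = (\<lambda>(s::nat, u::nat). if s \<le> x then x - s else x + v - s)"
  have bv: "s < v" if "s \<in> b" for s using b that by auto
  have K: "?K = {k. k < v \<and> (\<exists>s\<in>b. s + k = x \<or> s + k = x + v) \<and> (\<exists>u\<in>b. u + k = y \<or> u + k = y + v)}"
    using mem_shift_block_iff[OF b _ x] mem_shift_block_iff[OF b _ y] by auto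
  have "bij_betw f ?P ?K"
  proof (rule bij_betw_imageI)
    show "inj_on f ?P"
    proof (rule inj_onI)
      fix p q assume "p \<in> ?P" "q \<in> ?P" "f p = f q"
      moreover obtain s u s' u' where "p = (s, u)" "q = (s', u')" by fastforce
      moreover have "s < v" "u < v" "s' < v" "u' < v" using bv calculation by auto
      ultimately show "p = q" using x y by (auto simp: f_def cyclic_diff_def split: if_splits)
    qed
    show "f ` ?P = ?K"
    proof
      show "f ` ?P \<subseteq> ?K"
      proof
        fix k assume "k \<in> f ` ?P"
        then obtain s u where su: "(s, u) \<in> ?P" "k = f (s, u)" by auto
        moreover have "s < v" "u < v" using su bv by auto
        ultimately have "s + k = x \<or> s + k = x + v" "u + k = y \<or> u + k = y + v" "k < v"
          using x y by (auto simp: f_def cyclic_diff_def split: if_splits)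
        moreover have "s \<in> b" "u \<in> b" using su by auto
        ultimately show "k \<in> ?K" unfolding K by blast
      qed
      show "?K \<subseteq> f ` ?P"
      proof
        fix k assume "k \<in> ?K"
        then obtain s u where "k < v" "s \<in> b" "s + k = x \<or> s + k = x + v"
          "u \<in> b" "u + k = y \<or> u + k = y + v" unfolding K by auto
        moreover have "s < v" "u < v" using bv calculation by auto
        ultimately have "(s, u) \<in> ?P" "k = f (s, u)"
          using x y by (auto simp: f_def cyclic_diff_def)
        then show "k \<in> f ` ?P" by blast
      qed
    qed
  qed
  then show ?thesis by (simp add: bij_betw_same_card)
qed

lemma shift_block_small_neq:
  assumes b: "b \<subseteq> {0..M}" "0 \<in> b" and M: "2 * M < v" and d: "0 < d" "d < v"
  shows "shift_block v d b \<noteq> b"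
proof
  assume e: "shift_block v d b = b"
  have "d \<in> shift_block v d b" using b d by (force simp: mem_shift_block)
  then have "d \<le> M" using e b by auto
  obtain s where "s \<in> b" "(s + d) mod v = 0"
    using e b by (metis mem_shift_block)
  moreover have "s + d < v" using \<open>d \<le> M\<close> b M calculation by auto
  ultimately show False using d by simp
qed

lemma inj_on_shift_block_small:
  assumes b: "b \<subseteq> {0..M}" "0 \<in> b" and M: "2 * M < v"
  shows "inj_on (\<lambda>k. shift_block v k b) {0..<v}"
proof (rule linorder_inj_onI')
  fix k k' assume k: "k \<in> {0..<v}" "k' \<in> {0..<v}" "k < k'"
  have bv: "b \<subseteq> {0..<v}" using b M by auto
  have "shift_block v (v - k) (shift_block v k b) = b"
    using k shift_block_self[OF bv] by (simp add: shift_block_shift_block)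
  moreover have "shift_block v (v - k) (shift_block v k' b) = shift_block v (k' - k) b"
  proof -
    have "(v - k + k') mod v = k' - k"
      using k by (simp add: mod_if)
    then show ?thesis by (metis shift_block_mod shift_block_shift_block)
  qed
  moreover have "shift_block v (k' - k) b \<noteq> b"
    using shift_block_small_neq[OF b M] k by simp
  ultimately show "shift_block v k b \<noteq> shift_block v k' b" by auto
qed

lemma count_orbit_mset_small:
  assumes "b \<subseteq> {0..M}" "0 \<in> b" "2 * M < v"
  shows "count (orbit_mset v b) z = (if z \<in> block_orbit v b then 1 else 0)"
proof (cases "z \<in> block_orbit v b")
  case True
  then obtain k0 where k0: "k0 < v" "z = shift_block v k0 b" by (auto simp: block_orbit_def)
  then have "{k\<in>{0..<v}. shift_block v k b = z} = {k0}"
    using inj_on_shift_block_small[OF assms] by (auto dest: inj_onD)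
  then show ?thesis using True by (simp add: count_orbit_mset)
next
  case False
  then have "{k\<in>{0..<v}. shift_block v k b = z} = {}" by (auto simp: block_orbit_def)
  then show ?thesis using False by (simp add: count_orbit_mset)
qed

lemma card_pairs_eq_sum:
  assumes "finite A" "finite B"
  shows "card {(s,u)\<in>A \<times> B. P s u} = (\<Sum>s\<in>A. \<Sum>u\<in>B. if P s u then 1 else 0)"
proof -
  have "card {(s,u)\<in>A \<times> B. P s u} = card (A \<times> B \<inter> {x. case_prod P x})"
    by (rule arg_cong[where f = card]) auto
  also have "\<dots> = (\<Sum>x\<in>A \<times> B. if case_prod P x then 1 else 0)"
    using assms by (simp add: sum.If_cases)
  finally show ?thesis by (simp add: sum.cartesian_product case_prod_beta)
qed

text \<open>The number of the two elements \<open>\<plusminus>d\<close> of \<open>\<int>\<^sub>v\<close> equal to the residue \<open>t\<close>.\<close>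
definition diff_hits :: "nat \<Rightarrow> nat \<Rightarrow> nat \<Rightarrow> nat" where
  "diff_hits v t d = (if t = d then 1 else 0) + (if t + d = v then 1 else 0)"

lemma card_diff_pairs_triangle:
  fixes e f t v :: nat
  assumes "0 < e" "0 < f" "0 < t" "t < v"
  shows "card {(s,u)\<in>{0, e, e + f} \<times> {0, e, e + f}. t + s = u \<or> t + s = u + v}
    = diff_hits v t e + diff_hits v t f + diff_hits v t (e + f)"
  using assms by (subst card_pairs_eq_sum) (auto simp: diff_hits_def)

lemma image_mset_sum: "image_mset f (\<Sum>p\<in>A. M p) = (\<Sum>p\<in>A. image_mset f (M p))"
  by (induction A rule: infinite_finite_induct) simp_all

lemma image_mset_repeat_mset: "image_mset f (repeat_mset m M) = repeat_mset m (image_mset f M)"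
  by (induction m) simp_all

lemma size_filter_mset_sum: "size (filter_mset Q (\<Sum>p\<in>A. M p)) = (\<Sum>p\<in>A. size (filter_mset Q (M p)))"
  by (induction A rule: infinite_finite_induct) simp_all

lemma size_filter_repeat_mset: "size (filter_mset Q (repeat_mset m M)) = m * size (filter_mset Q M)"
  by (induction m) simp_all

locale cyclic_family =
  fixes v M :: nat and P :: "'i set" and base :: "'i \<Rightarrow> nat set"
  assumes finite_P: "finite P"
    and base_small: "p \<in> P \<Longrightarrow> base p \<subseteq> {0..M}"
    and zero_in_base: "p \<in> P \<Longrightarrow> 0 \<in> base p"
    and diameter_less: "2 * M < v"
    and inj_on_orbits: "inj_on (\<lambda>p. block_orbit v (base p)) P"
begin

definition system :: "('i \<Rightarrow> nat) \<Rightarrow> nat set multiset" where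
  "system \<mu> = (\<Sum>p\<in>P. repeat_mset (\<mu> p) (orbit_mset v (base p)))"

lemma base_subset: "p \<in> P \<Longrightarrow> base p \<subseteq> {0..<v}"
  using base_small diameter_less by fastforce

lemma count_system:
  "count (system \<mu>) z = (\<Sum>p\<in>P. if z \<in> block_orbit v (base p) then \<mu> p else 0)"
  unfolding system_def count_sum
  by (rule sum.cong) (simp_all add: count_orbit_mset_small[OF base_small zero_in_base diameter_less])

lemma count_system_orbit:
  assumes p: "p \<in> P" and z: "z \<in> block_orbit v (base p)"
  shows "count (system \<mu>) z = \<mu> p"
proof -
  have "z \<in> block_orbit v (base q) \<longleftrightarrow> q = p" if "q \<in> P" for q
    using block_orbit_eq_if_mem[of z] inj_onD[OF inj_on_orbits] that p z by metis
  then show ?thesis using p finite_P by (simp add: count_system if_distrib cong: sum.cong)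
qed

lemma mem_system:
  assumes "z \<in># system \<mu>"
  shows "\<exists>p\<in>P. z \<in> block_orbit v (base p)"
proof (rule ccontr)
  assume "\<not> ?thesis"
  then have "count (system \<mu>) z = 0" by (simp add: count_system)
  then show False using assms by (simp add: count_eq_zero_iff)
qed

lemma image_mset_shift_system: "image_mset (shift_block v 1) (system \<mu>) = system \<mu>"
  using image_mset_shift_orbit_mset[OF base_subset] diameter_less
  by (simp add: system_def image_mset_sum image_mset_repeat_mset)

lemma fine_c_system:
  assumes "0 < r"
  shows "fine_c v (system \<mu>) r = card {p\<in>P. \<mu> p = r}"
proof -
  have "{block_orbit v z | z. z \<in># system \<mu> \<and> count (system \<mu>) z = r}
      = (\<lambda>p. block_orbit v (base p)) ` {p\<in>P. \<mu> p = r}"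
  proof (intro equalityI subsetI)
    fix Ob assume "Ob \<in> {block_orbit v z | z. z \<in># system \<mu> \<and> count (system \<mu>) z = r}"
    then obtain z where z: "z \<in># system \<mu>" "count (system \<mu>) z = r" "Ob = block_orbit v z"
      by blast
    then obtain p where "p \<in> P" "z \<in> block_orbit v (base p)" using mem_system by blast
    then show "Ob \<in> (\<lambda>p. block_orbit v (base p)) ` {p\<in>P. \<mu> p = r}"
      using z count_system_orbit block_orbit_eq_if_mem by fastforce
  next
    fix Ob assume "Ob \<in> (\<lambda>p. block_orbit v (base p)) ` {p\<in>P. \<mu> p = r}"
    then obtain p where p: "p \<in> P" "\<mu> p = r" "Ob = block_orbit v (base p)" by blast
    have "base p \<in> block_orbit v (base p)"
      using mem_block_orbit_self[OF base_subset[OF p(1)]] diameter_less by simp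
    then have "count (system \<mu>) (base p) = r"
      using count_system_orbit p by simp
    then show "Ob \<in> {block_orbit v z | z. z \<in># system \<mu> \<and> count (system \<mu>) z = r}"
      using p assms by (force simp flip: count_greater_zero_iff)
  qed
  then show ?thesis
    unfolding fine_c_def using inj_on_orbits
    by (simp add: card_image inj_on_subset[of _ P])
qed

lemma is_CTS_system:
  assumes card_base: "\<And>p. p \<in> P \<Longrightarrow> card (base p) = 3"
    and diffs: "\<And>t. 0 < t \<Longrightarrow> t < v \<Longrightarrow>
      (\<Sum>p\<in>P. \<mu> p * card {(s,u)\<in>base p \<times> base p. t + s = u \<or> t + s = u + v}) = lam"
  shows "is_CTS v lam (system \<mu>)"
  unfolding is_CTS_def
proof (intro conjI ballI impI)
  fix z assume "z \<in># system \<mu>"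
  then obtain p where "p \<in> P" "z \<in> block_orbit v (base p)" using mem_system by blast
  then obtain k where p: "p \<in> P" "k < v" "z = shift_block v k (base p)"
    by (auto simp: block_orbit_def)
  then show "z \<subseteq> {0..<v}" "card z = 3"
    using shift_block_subset card_shift_block[OF base_subset] card_base by auto
next
  show "image_mset (shift_block v 1) (system \<mu>) = system \<mu>"
    by (rule image_mset_shift_system)
next
  fix x y assume xy: "x \<in> {0..<v}" "y \<in> {0..<v}" "x \<noteq> y"
  have "size (filter_mset (\<lambda>b. {x, y} \<subseteq> b) (system \<mu>))
    = (\<Sum>p\<in>P. \<mu> p * card {(s,u)\<in>base p \<times> base p.
         cyclic_diff v x y + s = u \<or> cyclic_diff v x y + s = u + v})"
    unfolding system_def size_filter_mset_sum size_filter_repeat_mset size_filter_orbit_mset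
    using xy card_shifts_containing_pair[OF base_subset] by (intro sum.cong refl) simp
  also have "\<dots> = lam"
    using diffs cyclic_diff_bounds xy by simp
  finally show "size (filter_mset (\<lambda>b. {x, y} \<subseteq> b) (system \<mu>)) = lam" .
qed

end

section \<open>Difference triples\<close>

lemma sum_list_map_concat_upt:
  "sum_list (map f (concat (map g [0..<n]))) = (\<Sum>k<n. sum_list (map f (g k)))"
  by (induction n) auto

locale difference_triples =
  fixes n v :: nat and a b :: "nat \<Rightarrow> nat"
  assumes v_def: "v = 6 * n + 1"
    and distinct_triples: "distinct (concat (map (\<lambda>k. [a k, b k, a k + b k]) [0..<n]))"
    and set_triples: "set (concat (map (\<lambda>k. [a k, b k, a k + b k]) [0..<n])) = {1..3 * n}"
begin

lemma triple_bounds: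
  assumes "k < n"
  shows "0 < a k" "0 < b k" "a k \<noteq> b k" "a k + b k \<le> 3 * n"
proof -
  have "{a k, b k, a k + b k} \<subseteq> {1..3 * n}"
    using assms unfolding set_triples[symmetric] by auto
  then show "0 < a k" "0 < b k" "a k + b k \<le> 3 * n" by auto
  have "\<forall>xs\<in>set (map (\<lambda>k. [a k, b k, a k + b k]) [0..<n]). distinct xs"
    using distinct_triples unfolding distinct_concat_iff by blast
  then show "a k \<noteq> b k" using assms by simp
qed

lemma triples_disjoint:
  assumes "k < n" "l < n" "k \<noteq> l"
  shows "{a k, b k, a k + b k} \<inter> {a l, b l, a l + b l} = {}"
proof -
  let ?T = "\<lambda>k. [a k, b k, a k + b k]"
  have "removeAll [] (map ?T [0..<n]) = map ?T [0..<n]" by (induction n) auto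
  moreover have "distinct (removeAll [] (map ?T [0..<n]))"
    and disj: "\<forall>xs ys. xs \<in> set (map ?T [0..<n]) \<and> ys \<in> set (map ?T [0..<n]) \<and> xs \<noteq> ys
      \<longrightarrow> set xs \<inter> set ys = {}"
    using distinct_triples unfolding distinct_concat_iff by blast+
  ultimately have "inj_on ?T {0..<n}" by (simp add: distinct_map)
  then have "?T k \<noteq> ?T l" using assms by (auto dest: inj_onD)
  then show ?thesis using disj[rule_format, of "?T k" "?T l"] assms by simp
qed

text \<open>Each triple gives the two base blocks \<open>{0, a, a + b}\<close> and \<open>{0, b, a + b}\<close>; both have
  the differences \<open>\<plusminus>a, \<plusminus>b, \<plusminus>(a + b)\<close>.\<close>
definition base_block :: "nat \<times> bool \<Rightarrow> nat set" where
  "base_block = (\<lambda>(k, first). if first then {0, a k, a k + b k} else {0, b k, a k + b k})"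

abbreviation indices :: "(nat \<times> bool) set" where
  "indices \<equiv> {0..<n} \<times> UNIV"

lemma base_block_small: "p \<in> indices \<Longrightarrow> base_block p \<subseteq> {0..3 * n}"
  using triple_bounds[of "fst p"] by (cases p) (auto simp: base_block_def)

lemma zero_in_base_block: "0 \<in> base_block p"
  by (cases p) (simp add: base_block_def)

lemma diff_in_triple:
  assumes "p \<in> indices" "y \<in> base_block p" "y + c \<in> base_block p" "0 < c"
  shows "c \<in> {a (fst p), b (fst p), a (fst p) + b (fst p)}"
  using assms by (auto simp: base_block_def split: if_splits)

lemma base_block_second_lacks_diffs:
  assumes "k < n"
  shows "\<not> (\<exists>y\<in>base_block (k, False). \<forall>c\<in>{a k, a k + b k}. y + c \<in> base_block (k, False))"
  using triple_bounds[OF assms] by (auto simp: base_block_def)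

lemma base_block_orbit_transfers_diffs:
  assumes p: "p \<in> indices" and p': "p' \<in> indices"
    and orbits: "block_orbit v (base_block p) = block_orbit v (base_block p')"
    and C: "C \<subseteq> base_block p" "C \<subseteq> {0..3 * n}"
  shows "\<exists>y\<in>base_block p'. \<forall>c\<in>C. y + c \<in> base_block p'"
proof -
  have "base_block p' \<subseteq> {0..<v}" using base_block_small[OF p'] v_def by auto
  then have "base_block p' \<in> block_orbit v (base_block p)"
    using mem_block_orbit_self[of "base_block p'" v] orbits v_def by simp
  then obtain d where "base_block p' = shift_block v d (base_block p)"
    by (auto simp: block_orbit_def)
  moreover have "2 * (3 * n) < v" using v_def by simp
  moreover have "\<forall>c\<in>C. 0 + c \<in> base_block p" using C by auto
  ultimately show ?thesis
    using shift_block_preserves_diffs[OF base_block_small[OF p] base_block_small[OF p']]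
      zero_in_base_block C by blast
qed

text \<open>The difference \<open>a + b\<close> of \<open>{0, a, a + b}\<close> identifies the triple, and the pair of
  differences \<open>a, a + b\<close> issuing from a common point distinguishes the two base blocks of a triple.\<close>
lemma inj_on_base_block_orbits: "inj_on (\<lambda>p. block_orbit v (base_block p)) indices"
proof (rule inj_onI)
  fix p q assume p: "p \<in> indices" and q: "q \<in> indices"
    and orbits: "block_orbit v (base_block p) = block_orbit v (base_block q)"
  obtain k f where pk: "p = (k, f)" "k < n" using p by auto
  obtain l g where ql: "q = (l, g)" "l < n" using q by auto
  have "\<exists>y\<in>base_block q. y + (a k + b k) \<in> base_block q"
    using base_block_orbit_transfers_diffs[OF p q orbits, of "{a k + b k}"] triple_bounds[OF pk(2)] pk
    by (auto simp: base_block_def)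
  then have "a k + b k \<in> {a l, b l, a l + b l}"
    using diff_in_triple[OF q] triple_bounds[OF pk(2)] ql by fastforce
  then have "k = l" using triples_disjoint[OF pk(2) ql(2)] by blast
  moreover have "f = g"
  proof (rule ccontr)
    assume "f \<noteq> g"
    then have "(k, True) \<in> {p, q}" "(k, False) \<in> {p, q}" using pk ql \<open>k = l\<close> by auto
    then have "\<exists>y\<in>base_block (k, False). \<forall>c\<in>{a k, a k + b k}. y + c \<in> base_block (k, False)"
      using base_block_orbit_transfers_diffs[of "(k, True)" "(k, False)" "{a k, a k + b k}"]
        p q orbits triple_bounds[OF pk(2)]
      by (auto simp: base_block_def)
    then show False using base_block_second_lacks_diffs[OF pk(2)] by blast
  qed
  ultimately show "p = q" using pk ql by simp
qed

sublocale cyclic_family v "3 * n" indices base_block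
proof unfold_locales
  show "2 * (3 * n) < v" using v_def by simp
qed (auto simp: base_block_small zero_in_base_block inj_on_base_block_orbits)

lemma card_diff_pairs_base_block:
  assumes "k < n" "0 < t" "t < v"
  shows "card {(s,u)\<in>base_block (k, first) \<times> base_block (k, first). t + s = u \<or> t + s = u + v}
    = diff_hits v t (a k) + diff_hits v t (b k) + diff_hits v t (a k + b k)"
  using card_diff_pairs_triangle[of "a k" "b k" t v] card_diff_pairs_triangle[of "b k" "a k" t v]
    triple_bounds[OF assms(1)] assms
  by (cases first) (simp_all add: base_block_def add.commute)

text \<open>The differences \<open>\<plusminus>a k, \<plusminus>b k, \<plusminus>(a k + b k)\<close> are \<open>\<plusminus>{1..3n}\<close>, i.e. every nonzero residue
  modulo \<open>6n + 1\<close> exactly once.\<close>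
lemma sum_diff_hits_triples:
  assumes "0 < t" "t < v"
  shows "(\<Sum>k<n. diff_hits v t (a k) + diff_hits v t (b k) + diff_hits v t (a k + b k)) = 1"
proof -
  have "(\<Sum>k<n. diff_hits v t (a k) + diff_hits v t (b k) + diff_hits v t (a k + b k))
      = sum_list (map (diff_hits v t) (concat (map (\<lambda>k. [a k, b k, a k + b k]) [0..<n])))"
    by (simp add: sum_list_map_concat_upt add.assoc)
  also have "\<dots> = (\<Sum>d\<in>{1..3 * n}. diff_hits v t d)"
    using sum_list_distinct_conv_sum_set[OF distinct_triples] set_triples by simp
  also have "\<dots> = (\<Sum>d\<in>{1..3 * n}. if d = t then 1 else 0) + (\<Sum>d\<in>{1..3 * n}. if d = v - t then 1 else 0)"
    unfolding diff_hits_def sum.distrib[symmetric] by (rule sum.cong) (use assms in auto)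
  also have "\<dots> = 1" using assms v_def by auto
  finally show ?thesis .
qed

definition multiplicity :: "nat \<Rightarrow> nat \<Rightarrow> nat \<times> bool \<Rightarrow> nat" where
  "multiplicity i j = (\<lambda>(k, first).
     let m = (if k < j then 4 else if k < i then 3 else 2) in if first then m else 4 - m)"

lemma is_CTS_system_multiplicity: "is_CTS v 4 (system (multiplicity i j))"
proof (rule is_CTS_system)
  fix p assume "p \<in> indices"
  then show "card (base_block p) = 3"
    using triple_bounds[of "fst p"] by (cases p) (auto simp: base_block_def)
next
  fix t assume t: "0 < t" "t < v"
  let ?H = "\<lambda>k. diff_hits v t (a k) + diff_hits v t (b k) + diff_hits v t (a k + b k)"
  have "(\<Sum>p\<in>indices. multiplicity i j p *
      card {(s,u)\<in>base_block p \<times> base_block p. t + s = u \<or> t + s = u + v})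
    = (\<Sum>(k, first)\<in>indices. multiplicity i j (k, first) * ?H k)"
    using card_diff_pairs_base_block[OF _ t] by (intro sum.cong) auto
  also have "\<dots> = (\<Sum>k<n. \<Sum>first\<in>UNIV. multiplicity i j (k, first) * ?H k)"
    by (simp add: sum.cartesian_product lessThan_atLeast0)
  also have "\<dots> = (\<Sum>k<n. 4 * ?H k)"
    by (rule sum.cong) (auto simp: UNIV_bool multiplicity_def Let_def algebra_simps)
  also have "\<dots> = 4 * (\<Sum>k<n. ?H k)" by (rule sum_distrib_left[symmetric])
  also have "\<dots> = 4" using sum_diff_hits_triples[OF t] by simp
  finally show "(\<Sum>p\<in>indices. multiplicity i j p *
      card {(s,u)\<in>base_block p \<times> base_block p. t + s = u \<or> t + s = u + v}) = 4" .
qed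

lemma fine_c_system_multiplicity:
  assumes "j \<le> i" "i \<le> n"
  shows "fine_c v (system (multiplicity i j)) 2 = 2 * n - 2 * i"
    and "fine_c v (system (multiplicity i j)) 3 = i - j"
    and "fine_c v (system (multiplicity i j)) 4 = j"
proof -
  have "{p\<in>indices. multiplicity i j p = 2} = {i..<n} \<times> UNIV"
    and "{p\<in>indices. multiplicity i j p = 3} = {j..<i} \<times> {True}"
    and "{p\<in>indices. multiplicity i j p = 4} = {0..<j} \<times> {True}"
    using assms by (auto simp: multiplicity_def Let_def split: if_splits)
  then show "fine_c v (system (multiplicity i j)) 2 = 2 * n - 2 * i"
    and "fine_c v (system (multiplicity i j)) 3 = i - j"
    and "fine_c v (system (multiplicity i j)) 4 = j"
    by (simp_all add: fine_c_system card_cartesian_product)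
qed

end

section \<open>Skolem sequences\<close>

definition skolem_positions :: "(nat \<times> nat) list \<Rightarrow> nat list" where
  "skolem_positions L = concat (map (\<lambda>(d, p). [p, p + d]) L)"

text \<open>An entry \<open>(d, p)\<close> places the symbol \<open>d\<close> at the positions \<open>p\<close> and \<open>p + d\<close>.\<close>
definition skolem_sequence :: "nat \<Rightarrow> (nat \<times> nat) list \<Rightarrow> bool" where
  "skolem_sequence n L \<longleftrightarrow> distinct (map fst L) \<and> set (map fst L) = {1..n} \<and>
     distinct (skolem_positions L) \<and> set (skolem_positions L) = {1..2 * n}"

lemma skolem_positions_simps [simp]:
  "skolem_positions [] = []"
  "skolem_positions ((d, p) # L) = p # (p + d) # skolem_positions L"
  by (simp_all add: skolem_positions_def)

lemma length_skolem_positions: "length (skolem_positions L) = 2 * length L"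
  by (induction L) auto

lemma skolem_sequenceI:
  assumes "length L = n" "fst ` set L = {1..n}" "set (skolem_positions L) = {1..2 * n}"
  shows "skolem_sequence n L"
  unfolding skolem_sequence_def
  using assms length_skolem_positions[of L] by (simp add: card_distinct)

lemma length_skolem_sequence: "skolem_sequence n L \<Longrightarrow> length L = n"
  unfolding skolem_sequence_def by (metis card_atLeastAtMost diff_Suc_1 distinct_card length_map)

lemma skolem_difference_triples:
  assumes "skolem_sequence n L"
  shows "distinct (concat (map (\<lambda>(d, p). [d, p + n, d + (p + n)]) L))"
    and "set (concat (map (\<lambda>(d, p). [d, p + n, d + (p + n)]) L)) = {1..3 * n}"
proof -
  let ?W = "concat (map (\<lambda>(d, p). [d, p + n, d + (p + n)]) L)"
  have "set ?W = set (map fst L) \<union> (\<lambda>x. x + n) ` set (skolem_positions L)"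
    by (induction L) (auto simp: ac_simps)
  also have "\<dots> = {1..3 * n}"
    using assms unfolding skolem_sequence_def by (auto simp: image_add_atLeastAtMost)
  finally show "set ?W = {1..3 * n}" .
  moreover have "length ?W = 3 * length L" by (induction L) auto
  ultimately show "distinct ?W" using length_skolem_sequence[OF assms] by (simp add: card_distinct)
qed

lemma skolem_positions_append: "skolem_positions (L @ L') = skolem_positions L @ skolem_positions L'"
  by (simp add: skolem_positions_def)

lemma mem_fst_set_map_upt: "x \<in> fst ` set (map f [a..<b]) \<longleftrightarrow> (\<exists>r. a \<le> r \<and> r < b \<and> x = fst (f r))"
  by force

lemma mem_skolem_positions_map_upt: "x \<in> set (skolem_positions (map f [a..<b])) \<longleftrightarrow>
    (\<exists>r. a \<le> r \<and> r < b \<and> (x = snd (f r) \<or> x = snd (f r) + fst (f r)))"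
  by (force simp: skolem_positions_def case_prod_beta)

definition skolem_mod4_0 :: "nat \<Rightarrow> (nat \<times> nat) list" where
  "skolem_mod4_0 s =
     map (\<lambda>r. (4 * s + 2 - 2 * r, 4 * s + r - 1)) [1..<2 * s + 1] @
     map (\<lambda>r. (4 * s - 2 * r - 1, r)) [1..<s] @
     map (\<lambda>r. (2 * s - 2 * r - 1, s + r + 1)) [1..<s - 1] @
     [(1, s), (2 * s - 1, 2 * s), (4 * s - 1, 2 * s + 1)]"

definition skolem_mod4_1 :: "nat \<Rightarrow> (nat \<times> nat) list" where
  "skolem_mod4_1 s =
     map (\<lambda>r. (4 * s + 2 - 2 * r, 4 * s + r + 1)) [1..<2 * s + 1] @
     map (\<lambda>r. (4 * s + 1 - 2 * r, r)) [1..<s + 1] @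
     map (\<lambda>r. (2 * s - 2 * r - 1, s + r + 2)) [1..<s - 1] @
     [(1, s + 1), (4 * s + 1, 2 * s + 1), (2 * s - 1, 2 * s + 2)]"

text \<open>Subtraction-free descriptions of the symbols and positions, so that \<open>presburger\<close> can
  check that the arithmetic progressions tile the required intervals.\<close>
lemma symbols_skolem_mod4_0:
  assumes "2 \<le> s"
  shows "x \<in> fst ` set (skolem_mod4_0 s) \<longleftrightarrow>
    (\<exists>r. 1 \<le> r \<and> r \<le> 2 * s \<and> x + 2 * r = 4 * s + 2) \<or>
    (\<exists>r. 1 \<le> r \<and> r < s \<and> x + 2 * r + 1 = 4 * s) \<or>
    (\<exists>r. 1 \<le> r \<and> r + 1 < s \<and> x + 2 * r + 1 = 2 * s) \<or>
    x = 1 \<or> x + 1 = 2 * s \<or> x + 1 = 4 * s"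
  unfolding skolem_mod4_0_def set_append image_Un Un_iff mem_fst_set_map_upt
  using assms by (intro arg_cong2[where f = "(\<or>)"] ex_cong1) auto

lemma positions_skolem_mod4_0:
  assumes "2 \<le> s"
  shows "x \<in> set (skolem_positions (skolem_mod4_0 s)) \<longleftrightarrow>
    (\<exists>r. 1 \<le> r \<and> r \<le> 2 * s \<and> (x + 1 = 4 * s + r \<or> x + r = 8 * s + 1)) \<or>
    (\<exists>r. 1 \<le> r \<and> r < s \<and> (x = r \<or> x + r + 1 = 4 * s)) \<or>
    (\<exists>r. 1 \<le> r \<and> r + 1 < s \<and> (x = s + r + 1 \<or> x + r = 3 * s)) \<or>
    x = s \<or> x = s + 1 \<or> x = 2 * s \<or> x + 1 = 4 * s \<or> x = 2 * s + 1 \<or> x = 6 * s"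
  unfolding skolem_mod4_0_def skolem_positions_append set_append Un_iff mem_skolem_positions_map_upt
  using assms by (intro arg_cong2[where f = "(\<or>)"] ex_cong1) auto

lemma symbols_skolem_mod4_1:
  assumes "2 \<le> s"
  shows "x \<in> fst ` set (skolem_mod4_1 s) \<longleftrightarrow>
    (\<exists>r. 1 \<le> r \<and> r \<le> 2 * s \<and> x + 2 * r = 4 * s + 2) \<or>
    (\<exists>r. 1 \<le> r \<and> r \<le> s \<and> x + 2 * r = 4 * s + 1) \<or>
    (\<exists>r. 1 \<le> r \<and> r + 1 < s \<and> x + 2 * r + 1 = 2 * s) \<or>
    x = 1 \<or> x = 4 * s + 1 \<or> x + 1 = 2 * s"
  unfolding skolem_mod4_1_def set_append image_Un Un_iff mem_fst_set_map_upt
  using assms by (intro arg_cong2[where f = "(\<or>)"] ex_cong1) auto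

lemma positions_skolem_mod4_1:
  assumes "2 \<le> s"
  shows "x \<in> set (skolem_positions (skolem_mod4_1 s)) \<longleftrightarrow>
    (\<exists>r. 1 \<le> r \<and> r \<le> 2 * s \<and> (x = 4 * s + r + 1 \<or> x + r = 8 * s + 3)) \<or>
    (\<exists>r. 1 \<le> r \<and> r \<le> s \<and> (x = r \<or> x + r = 4 * s + 1)) \<or>
    (\<exists>r. 1 \<le> r \<and> r + 1 < s \<and> (x = s + r + 2 \<or> x + r = 3 * s + 1)) \<or>
    x = s + 1 \<or> x = s + 2 \<or> x = 2 * s + 1 \<or> x = 6 * s + 2 \<or> x = 2 * s + 2 \<or> x = 4 * s + 1"
  unfolding skolem_mod4_1_def skolem_positions_append set_append Un_iff mem_skolem_positions_map_upt
  using assms by (intro arg_cong2[where f = "(\<or>)"] ex_cong1) auto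

lemma skolem_sequence_mod4_0:
  assumes "2 \<le> s"
  shows "skolem_sequence (4 * s) (skolem_mod4_0 s)"
proof (rule skolem_sequenceI)
  show "length (skolem_mod4_0 s) = 4 * s"
    using assms by (simp add: skolem_mod4_0_def)
  show "fst ` set (skolem_mod4_0 s) = {1..4 * s}"
  proof (intro set_eqI iffI)
    fix x assume "x \<in> fst ` set (skolem_mod4_0 s)"
    then show "x \<in> {1..4 * s}" using assms unfolding symbols_skolem_mod4_0[OF assms] by auto
  next
    fix x assume "x \<in> {1..4 * s}"
    then show "x \<in> fst ` set (skolem_mod4_0 s)"
      unfolding symbols_skolem_mod4_0[OF assms] atLeastAtMost_iff using assms by presburger
  qed
  show "set (skolem_positions (skolem_mod4_0 s)) = {1..2 * (4 * s)}"
  proof (intro set_eqI iffI)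
    fix x assume "x \<in> set (skolem_positions (skolem_mod4_0 s))"
    then show "x \<in> {1..2 * (4 * s)}" using assms unfolding positions_skolem_mod4_0[OF assms] by auto
  next
    fix x assume x: "x \<in> {1..2 * (4 * s)}"
    have "(\<exists>r. 1 \<le> r \<and> r < s \<and> (x = r \<or> x + r + 1 = 4 * s)) \<or>
        (\<exists>r. 1 \<le> r \<and> r + 1 < s \<and> (x = s + r + 1 \<or> x + r = 3 * s)) \<or>
        x = s \<or> x = s + 1 \<or> x = 2 * s \<or> x + 1 = 4 * s \<or> x = 2 * s + 1"
      if "1 \<le> x" "x < 4 * s" using that assms by presburger
    moreover have "(\<exists>r. 1 \<le> r \<and> r \<le> 2 * s \<and> (x + 1 = 4 * s + r \<or> x + r = 8 * s + 1)) \<or> x = 6 * s"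
      if "4 * s \<le> x" "x \<le> 8 * s" using that assms by presburger
    ultimately show "x \<in> set (skolem_positions (skolem_mod4_0 s))"
      unfolding positions_skolem_mod4_0[OF assms] using x by (cases "x < 4 * s") auto
  qed
qed

lemma skolem_sequence_mod4_1:
  assumes "2 \<le> s"
  shows "skolem_sequence (4 * s + 1) (skolem_mod4_1 s)"
proof (rule skolem_sequenceI)
  show "length (skolem_mod4_1 s) = 4 * s + 1"
    using assms by (simp add: skolem_mod4_1_def)
  show "fst ` set (skolem_mod4_1 s) = {1..4 * s + 1}"
  proof (intro set_eqI iffI)
    fix x assume "x \<in> fst ` set (skolem_mod4_1 s)"
    then show "x \<in> {1..4 * s + 1}" using assms unfolding symbols_skolem_mod4_1[OF assms] by auto
  next
    fix x assume "x \<in> {1..4 * s + 1}"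
    then show "x \<in> fst ` set (skolem_mod4_1 s)"
      unfolding symbols_skolem_mod4_1[OF assms] atLeastAtMost_iff using assms by presburger
  qed
  show "set (skolem_positions (skolem_mod4_1 s)) = {1..2 * (4 * s + 1)}"
  proof (intro set_eqI iffI)
    fix x assume "x \<in> set (skolem_positions (skolem_mod4_1 s))"
    then show "x \<in> {1..2 * (4 * s + 1)}"
      using assms unfolding positions_skolem_mod4_1[OF assms] by auto
  next
    fix x assume x: "x \<in> {1..2 * (4 * s + 1)}"
    have "(\<exists>r. 1 \<le> r \<and> r \<le> s \<and> (x = r \<or> x + r = 4 * s + 1)) \<or>
        (\<exists>r. 1 \<le> r \<and> r + 1 < s \<and> (x = s + r + 2 \<or> x + r = 3 * s + 1)) \<or>
        x = s + 1 \<or> x = s + 2 \<or> x = 2 * s + 1 \<or> x = 2 * s + 2 \<or> x = 4 * s + 1"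
      if "1 \<le> x" "x < 4 * s + 2" using that assms by presburger
    moreover have "(\<exists>r. 1 \<le> r \<and> r \<le> 2 * s \<and> (x = 4 * s + r + 1 \<or> x + r = 8 * s + 3)) \<or>
        x = 6 * s + 2"
      if "4 * s + 2 \<le> x" "x \<le> 8 * s + 2" using that assms by presburger
    ultimately show "x \<in> set (skolem_positions (skolem_mod4_1 s))"
      unfolding positions_skolem_mod4_1[OF assms] using x by (cases "x < 4 * s + 2") auto
  qed
qed

lemma skolem_sequence_small:
  "skolem_sequence 0 []"
  "skolem_sequence 1 [(1, 1)]"
  "skolem_sequence 4 [(1, 1), (2, 4), (3, 5), (4, 3)]"
  "skolem_sequence 5 [(1, 8), (2, 1), (3, 4), (4, 2), (5, 5)]"
  by code_simp+

theorem skolem_sequence_exists: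
  assumes "n mod 4 = 0 \<or> n mod 4 = 1"
  shows "\<exists>L. skolem_sequence n L"
proof -
  have "n = 0 \<or> n = 1 \<or> n = 4 \<or> n = 5 \<or> (\<exists>s\<ge>2. n = 4 * s) \<or> (\<exists>s\<ge>2. n = 4 * s + 1)"
    using assms by presburger
  then show ?thesis
    using skolem_sequence_small skolem_sequence_mod4_0 skolem_sequence_mod4_1 by blast
qed

lemma difference_triples_skolem:
  assumes "skolem_sequence n L"
  shows "difference_triples n (6 * n + 1) (\<lambda>k. fst (L ! k)) (\<lambda>k. snd (L ! k) + n)"
proof -
  have "map (\<lambda>k. [fst (L ! k), snd (L ! k) + n, fst (L ! k) + (snd (L ! k) + n)]) [0..<n]
      = map (\<lambda>(d, p). [d, p + n, d + (p + n)]) L"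
    using length_skolem_sequence[OF assms] by (intro nth_equalityI) (auto simp: case_prod_beta)
  then show ?thesis
    using skolem_difference_triples[OF assms] by unfold_locales simp_all
qed

lemma order_mod_24:
  fixes v n :: nat
  assumes "v mod 24 = 1 \<or> v mod 24 = 7" "n = (v - 1) div 6"
  shows "v = 6 * n + 1 \<and> (n mod 4 = 0 \<or> n mod 4 = 1)"
proof -
  define t where "t = v div 24"
  have v: "v = 24 * t + v mod 24" unfolding t_def by simp
  show ?thesis using assms(1)
  proof
    assume "v mod 24 = 1"
    then have "v - 1 = 6 * (4 * t)" "v = 24 * t + 1" using v by simp_all
    then show ?thesis using assms(2) by simp
  next
    assume "v mod 24 = 7"
    then have "v - 1 = 6 * (4 * t + 1)" "v = 24 * t + 7" using v by simp_all
    then show ?thesis using assms(2) by simp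
  qed
qed

theorem mainTheorem13:
  fixes v n i j :: nat
  assumes "v mod 24 = 1 \<or> v mod 24 = 7"
    and "v \<ge> 7"
    and "n = (v - 1) div 6"
    and "j \<le> n" and "j \<le> i" and "i \<le> n"
  shows "\<exists>B. is_CTS v 4 B \<and>
           fine_c v B 2 = 2 * n - 2 * i \<and>
           fine_c v B 3 = i - j \<and>
           fine_c v B 4 = j"
proof -
  have v: "v = 6 * n + 1" and n: "n mod 4 = 0 \<or> n mod 4 = 1"
    using order_mod_24[OF assms(1,3)] by simp_all
  obtain L where "skolem_sequence n L" using skolem_sequence_exists[OF n] by blast
  then interpret difference_triples n v "\<lambda>k. fst (L ! k)" "\<lambda>k. snd (L ! k) + n"
    using difference_triples_skolem v by simp
  show ?thesis
    using is_CTS_system_multiplicity fine_c_system_multiplicity assms(5,6) by blast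
qed

end
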